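(* Let $z>0$ and $\mu\in\left(-\frac{5}{2},-\frac{1}{2}\right)$ with $\mu\neq-\frac{3}{2}$. Then $$\left[s_{\mu,\frac{1}{2}}(z)\right]^2-s_{\mu-1,\frac{1}{2}}(z)\,s_{\mu+1,\frac{1}{2}}(z)>\frac{1}{\frac{1}{2}-\mu}\left[s_{\mu,\frac{1}{2}}(z)\right]^2,$$ where $s_{\mu,\nu}$ denotes the Lommel function of the first kind.
   Context: The Lommel function of the first kind $s_{\mu,\nu}$ is the particular solution of the inhomogeneous Bessel equation $z^2y''+zy'+(z^2-\nu^2)y=z^{\mu+1}$ given by $$s_{\mu,\nu}(z)=\frac{z^{\mu+1}}{(\mu-\nu+1)(\mu+\nu+1)}\,{}_{1}F_{2}\left(1;\frac{\mu-\nu+3}{2},\frac{\mu+\nu+3}{2};-\frac{z^2}{4}\right),$$ where ${}_1F_2(a;b_1,b_2;x)=\sum_{n\ge0}\frac{(a)_n}{(b_1)_n(b_2)_n}\frac{x^n}{n!}$ and $(a)_n$ is the Pochhammer symbol; it is undefined when either of $\mu\pm\nu$ is an odd negative integer. For $z>0$, $z^{\mu+1}$ denotes the positive real power. *)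

theory Defs
  imports "HOL-Analysis.Analysis"
begin

definition hyp1F2 :: "real \<Rightarrow> real \<Rightarrow> real \<Rightarrow> real \<Rightarrow> real" where
  "hyp1F2 a b1 b2 x =
     (\<Sum>n. pochhammer a n / (pochhammer b1 n * pochhammer b2 n) * x ^ n / fact n)"

definition lommel_s :: "real \<Rightarrow> real \<Rightarrow> real \<Rightarrow> real" where
  "lommel_s mu nu z =
     z powr (mu + 1) / ((mu - nu + 1) * (mu + nu + 1)) *
     hyp1F2 1 ((mu - nu + 3) / 2) ((mu + nu + 3) / 2) (- (z ^ 2) / 4)"

end

theory Submission imports Defs begin

text \<open>
  Put b = mu + 3/2. By the duplication formula 4^n (b/2)_n ((b+1)/2)_n = (b)_2n, the three
  Lommel functions s(mu-1), s(mu), s(mu+1) of order 1/2 are z^mu times X/((b-2)(b-1)), Y/(b-1)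
  and 1 - X, where X + iY = sum over k of (iz)^k/(b)_k. The Turan-type difference then equals
  z^(2 mu) (X^2 - X + Y^2)/((1-b)(2-b)), so it suffices to show X^2 + Y^2 > 1 for -1 < b < 1,
  b \<noteq> 0. The series satisfy t X' = (1-b)(X-1) - tY and t Y' = (1-b)Y + tX, so
  t^(b-1) (X^2 + Y^2 - 1) has derivative (1-b) t^(b-2) ((X-1)^2 + Y^2) \<ge> 0 and is nondecreasing
  on t > 0; and near 0, X^2 + Y^2 - 1 \<sim> t^2 (1-b)/(b^2 (b+1)) > 0.
\<close>

text \<open>pcos b t + i psin b t = 1F1(1; b; it); for b = 1 these are cos t and sin t.\<close>

definition pcos_coeff :: "real \<Rightarrow> nat \<Rightarrow> real" where
  "pcos_coeff b k = (if even k then (-1)^(k div 2) / pochhammer b k else 0)"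

definition psin_coeff :: "real \<Rightarrow> nat \<Rightarrow> real" where
  "psin_coeff b k = (if odd k then (-1)^(k div 2) / pochhammer b k else 0)"

definition pcos :: "real \<Rightarrow> real \<Rightarrow> real" where
  "pcos b t = (\<Sum>k. pcos_coeff b k * t^k)"

definition psin :: "real \<Rightarrow> real \<Rightarrow> real" where
  "psin b t = (\<Sum>k. psin_coeff b k * t^k)"

lemma summable_power_div_pochhammer: "summable (\<lambda>n. \<bar>t\<bar>^n / \<bar>pochhammer (b::real) n\<bar>)"
proof (rule summable_ratio_test[where c="1/2" and N="nat (ceiling (2*\<bar>t\<bar> + \<bar>b\<bar>)) + 1"])
  fix n assume "n \<ge> nat (ceiling (2*\<bar>t\<bar> + \<bar>b\<bar>)) + 1"
  hence bn: "\<bar>b + real n\<bar> \<ge> 2*\<bar>t\<bar> + 1" by linarith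
  have "norm (\<bar>t\<bar>^Suc n / \<bar>pochhammer b (Suc n)\<bar>) = (\<bar>t\<bar>^n / \<bar>pochhammer b n\<bar>) * (\<bar>t\<bar> / \<bar>b + real n\<bar>)"
    by (simp add: pochhammer_rec' abs_mult mult_ac)
  also have "\<dots> \<le> (\<bar>t\<bar>^n / \<bar>pochhammer b n\<bar>) * (1/2)"
    by (rule mult_left_mono) (use bn in \<open>auto simp: field_simps\<close>)
  finally show "norm (\<bar>t\<bar>^Suc n / \<bar>pochhammer b (Suc n)\<bar>) \<le> 1/2 * norm (\<bar>t\<bar>^n / \<bar>pochhammer b n\<bar>)"
    by simp
qed simp

lemma summable_pcos_coeff: "summable (\<lambda>k. pcos_coeff b k * t^k)"
  by (rule summable_comparison_test[OF _ summable_power_div_pochhammer[of t b]])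
     (auto simp: pcos_coeff_def abs_mult power_abs)

lemma summable_psin_coeff: "summable (\<lambda>k. psin_coeff b k * t^k)"
  by (rule summable_comparison_test[OF _ summable_power_div_pochhammer[of t b]])
     (auto simp: psin_coeff_def abs_mult power_abs)

lemma pcos_sums: "(\<lambda>k. pcos_coeff b k * t^k) sums pcos b t"
  unfolding pcos_def by (rule summable_sums[OF summable_pcos_coeff])

lemma psin_sums: "(\<lambda>k. psin_coeff b k * t^k) sums psin b t"
  unfolding psin_def by (rule summable_sums[OF summable_psin_coeff])

lemma pcos_0 [simp]: "pcos b 0 = 1"
  unfolding pcos_def powser_zero by (simp add: pcos_coeff_def)

lemma psin_eq_pcos: "psin b t = t / b * pcos (b + 1) t"
proof -
  have "(\<lambda>k. t / b * (pcos_coeff (b + 1) k * t^k)) sums (t / b * pcos (b + 1) t)"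
    by (rule sums_mult[OF pcos_sums])
  moreover have "(\<lambda>k. t / b * (pcos_coeff (b + 1) k * t^k)) = (\<lambda>k. psin_coeff b (Suc k) * t^Suc k)"
    by (auto simp: fun_eq_iff pcos_coeff_def psin_coeff_def pochhammer_rec mult_ac)
  ultimately have "(\<lambda>k. psin_coeff b (Suc k) * t^Suc k) sums (t / b * pcos (b + 1) t)"
    by simp
  then have "(\<lambda>k. psin_coeff b k * t^k) sums (t / b * pcos (b + 1) t)"
    by (subst (asm) sums_Suc_iff) (simp add: psin_coeff_def)
  with psin_sums show ?thesis by (rule sums_unique2)
qed

lemma pcos_eq_pcos_add_2: "pcos b t = 1 - t^2 / (b * (b + 1)) * pcos (b + 2) t"
proof -
  have "(\<lambda>k. - (t^2 / (b * (b + 1))) * (pcos_coeff (b + 2) k * t^k)) sums (- (t^2 / (b * (b + 1))) * pcos (b + 2) t)"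
    by (rule sums_mult[OF pcos_sums])
  moreover have "(\<lambda>k. - (t^2 / (b * (b + 1))) * (pcos_coeff (b + 2) k * t^k))
               = (\<lambda>k. pcos_coeff b (Suc (Suc k)) * t^Suc (Suc k))"
  proof
    fix k
    have "pochhammer b (Suc (Suc k)) = b * (b + 1) * pochhammer (b + 2) k"
      by (simp add: pochhammer_rec add.assoc)
    then show "- (t^2 / (b * (b + 1))) * (pcos_coeff (b + 2) k * t^k) = pcos_coeff b (Suc (Suc k)) * t^Suc (Suc k)"
      by (simp add: pcos_coeff_def power2_eq_square mult_ac)
  qed
  ultimately have "(\<lambda>k. pcos_coeff b (Suc (Suc k)) * t^Suc (Suc k)) sums (- (t^2 / (b * (b + 1))) * pcos (b + 2) t)"
    by simp
  then have "(\<lambda>k. pcos_coeff b k * t^k) sums (- (t^2 / (b * (b + 1))) * pcos (b + 2) t + 1)"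
    by (subst (asm) sums_Suc_iff, subst (asm) sums_Suc_iff) (simp add: pcos_coeff_def)
  with pcos_sums[of b t] show ?thesis by (simp add: sums_iff)
qed

lemma hyp1F2_eq_pcos: "hyp1F2 1 (b / 2) ((b + 1) / 2) (- (t^2) / 4) = pcos b t"
proof -
  have "(\<lambda>n. pcos_coeff b (2 * n) * t^(2 * n)) sums pcos b t"
  proof (subst sums_mono_reindex[OF strict_monoI, of "\<lambda>n. 2 * n"])
    fix n :: nat
    assume "n \<notin> range (\<lambda>n. 2 * n)"
    then have "odd n" by (metis dvdE rangeI)
    then show "pcos_coeff b n * t^n = 0" by (simp add: pcos_coeff_def)
  qed (simp_all add: pcos_sums)
  moreover have "pcos_coeff b (2 * n) * t^(2 * n) =
     pochhammer 1 n / (pochhammer (b / 2) n * pochhammer ((b + 1) / 2) n) * (- (t^2) / 4)^n / fact n" for n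
  proof -
    have "pochhammer b (2 * n) = 4^n * pochhammer (b / 2) n * pochhammer ((b + 1) / 2) n"
      using pochhammer_double[of "b / 2" n] by (simp add: add_divide_distrib power_mult)
    moreover have "(- (t^2) / 4)^n = (-1)^n * t^(2 * n) / 4^n"
      by (simp add: power_mult power_mult_distrib[of "-1", symmetric] flip: power_divide)
    ultimately show ?thesis by (simp add: pcos_coeff_def pochhammer_fact[symmetric])
  qed
  ultimately show ?thesis
    unfolding hyp1F2_def by (simp only:) (rule sums_unique[symmetric])
qed

lemma lommel_s_half_eq_pcos:
  "lommel_s (b - 5/2) (1/2) z = z powr (b - 3/2) / ((b - 2) * (b - 1)) * pcos b z"
proof -
  have "(b - 5/2 - 1/2 + 3) / 2 = b / 2" "(b - 5/2 + 1/2 + 3) / 2 = (b + 1) / 2"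
       "b - 5/2 - 1/2 + 1 = b - 2" "b - 5/2 + 1/2 + 1 = b - 1" "b - 5/2 + 1 = b - 3/2"
    by simp_all
  then show ?thesis unfolding lommel_s_def by (simp only: hyp1F2_eq_pcos)
qed

lemma powser_has_real_derivative_times:
  fixes a :: "nat \<Rightarrow> real"
  assumes "\<And>t. summable (\<lambda>k. a k * t^k)"
  obtains D where "((\<lambda>t. \<Sum>k. a k * t^k) has_real_derivative D) (at t)"
    and "(\<lambda>n. real (Suc n) * a (Suc n) * t^Suc n) sums (t * D)"
proof
  show "((\<lambda>t. \<Sum>k. a k * t^k) has_real_derivative (\<Sum>n. diffs a n * t^n)) (at t)"
    by (rule termdiffs_strong_converges_everywhere[OF assms])
  show "(\<lambda>n. real (Suc n) * a (Suc n) * t^Suc n) sums (t * (\<Sum>n. diffs a n * t^n))"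
    using sums_mult[OF summable_sums[OF termdiff_converges_all[OF assms]], of t]
    by (simp add: diffs_def mult_ac)
qed

lemma pcos_coeff_Suc:
  assumes "b + real n \<noteq> 0"
  shows "(b + real n) * pcos_coeff b (Suc n) = - psin_coeff b n"
  using assms by (auto simp: pcos_coeff_def psin_coeff_def pochhammer_rec' elim!: oddE)

lemma psin_coeff_Suc:
  assumes "b + real n \<noteq> 0"
  shows "(b + real n) * psin_coeff b (Suc n) = pcos_coeff b n"
  using assms by (auto simp: pcos_coeff_def psin_coeff_def pochhammer_rec' elim!: evenE)

lemma pcos_has_real_derivative:
  assumes "\<And>n. b + real n \<noteq> 0"
  obtains D where "(pcos b has_real_derivative D) (at t)"
    and "t * D = (1 - b) * (pcos b t - 1) - t * psin b t"
proof -
  obtain D where D: "(pcos b has_real_derivative D) (at t)"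
    and sums_D: "(\<lambda>n. real (Suc n) * pcos_coeff b (Suc n) * t^Suc n) sums (t * D)"
    using powser_has_real_derivative_times[OF summable_pcos_coeff]
    unfolding pcos_def[abs_def] by blast
  have "real (Suc n) * pcos_coeff b (Suc n) * t^Suc n
        = (1 - b) * (pcos_coeff b (Suc n) * t^Suc n) - t * (psin_coeff b n * t^n)" for n
  proof -
    have "real (Suc n) * pcos_coeff b (Suc n) * t^Suc n
          = (1 - b) * (pcos_coeff b (Suc n) * t^Suc n) + t * t^n * ((b + real n) * pcos_coeff b (Suc n))"
      by (simp add: algebra_simps)
    then show ?thesis unfolding pcos_coeff_Suc[OF assms] by simp
  qed
  moreover have "(\<lambda>n. pcos_coeff b (Suc n) * t^Suc n) sums (pcos b t - 1)"
    using pcos_sums[of b t] by (subst sums_Suc_iff) (simp add: pcos_coeff_def)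
  ultimately have "(\<lambda>n. real (Suc n) * pcos_coeff b (Suc n) * t^Suc n)
                   sums ((1 - b) * (pcos b t - 1) - t * psin b t)"
    by (simp only:) (intro sums_diff sums_mult psin_sums)
  with D sums_D show thesis by (metis sums_unique2 that)
qed

lemma psin_has_real_derivative:
  assumes "\<And>n. b + real n \<noteq> 0"
  obtains D where "(psin b has_real_derivative D) (at t)"
    and "t * D = (1 - b) * psin b t + t * pcos b t"
proof -
  obtain D where D: "(psin b has_real_derivative D) (at t)"
    and sums_D: "(\<lambda>n. real (Suc n) * psin_coeff b (Suc n) * t^Suc n) sums (t * D)"
    using powser_has_real_derivative_times[OF summable_psin_coeff]
    unfolding psin_def[abs_def] by blast
  have "real (Suc n) * psin_coeff b (Suc n) * t^Suc n
        = (1 - b) * (psin_coeff b (Suc n) * t^Suc n) + t * (pcos_coeff b n * t^n)" for n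
  proof -
    have "real (Suc n) * psin_coeff b (Suc n) * t^Suc n
          = (1 - b) * (psin_coeff b (Suc n) * t^Suc n) + t * t^n * ((b + real n) * psin_coeff b (Suc n))"
      by (simp add: algebra_simps)
    then show ?thesis unfolding psin_coeff_Suc[OF assms] by simp
  qed
  moreover have "(\<lambda>n. psin_coeff b (Suc n) * t^Suc n) sums psin b t"
    using psin_sums[of b t] by (subst sums_Suc_iff) (simp add: psin_coeff_def)
  ultimately have "(\<lambda>n. real (Suc n) * psin_coeff b (Suc n) * t^Suc n)
                   sums ((1 - b) * psin b t + t * pcos b t)"
    by (simp only:) (intro sums_add sums_mult pcos_sums)
  with D sums_D show thesis by (metis sums_unique2 that)
qed

lemma isCont_pcos: "isCont (pcos b) t"
proof -
  obtain D where "(pcos b has_real_derivative D) (at t)"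
    using powser_has_real_derivative_times[OF summable_pcos_coeff]
    unfolding pcos_def[abs_def] by blast
  then show ?thesis by (rule DERIV_isCont)
qed

lemma sum_squares_pcos_psin_minus_1:
  "pcos b t ^ 2 + psin b t ^ 2 - 1 =
     t^2 * ((pcos (b + 1) t / b)^2 - pcos (b + 2) t / (b * (b + 1)) * (pcos b t + 1))"
proof -
  have "pcos b t ^ 2 + psin b t ^ 2 - 1 = (pcos b t - 1) * (pcos b t + 1) + psin b t ^ 2"
    by (simp add: algebra_simps power2_eq_square)
  also have "\<dots> = (- (t^2 / (b * (b + 1))) * pcos (b + 2) t) * (pcos b t + 1) + (t * (pcos (b + 1) t / b))^2"
    using pcos_eq_pcos_add_2[of b t] by (simp add: psin_eq_pcos)
  finally show ?thesis by (simp add: algebra_simps power2_eq_square)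
qed

lemma eventually_sum_squares_pcos_psin_gt_1:
  assumes "-1 < b" "b < 1" "b \<noteq> 0"
  shows "\<forall>\<^sub>F t in at 0. pcos b t ^ 2 + psin b t ^ 2 > 1"
proof -
  define E where "E t = (pcos (b + 1) t / b)^2 - pcos (b + 2) t / (b * (b + 1)) * (pcos b t + 1)" for t
  have "b + 1 \<noteq> 0" "b \<noteq> 0"
    using assms by auto
  then have "E 0 = (1 - b) / (b^2 * (b + 1))"
    by (simp add: E_def power_divide divide_simps) (simp add: algebra_simps power2_eq_square)
  also have "\<dots> > 0"
    using assms by (simp add: zero_less_mult_iff)
  finally have "E 0 > 0" .
  moreover have "isCont E 0"
    unfolding E_def[abs_def] by (intro continuous_intros isCont_pcos) (use assms in auto)
  ultimately have "\<forall>\<^sub>F t in at 0. E t > 0"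
    by (metis isCont_def order_tendstoD(1))
  moreover have "\<forall>\<^sub>F t in at 0. t \<noteq> (0::real)"
    by (simp add: eventually_at_filter)
  ultimately show ?thesis
  proof eventually_elim
    case (elim t)
    then have "t^2 * E t > 0" by simp
    then show ?case using sum_squares_pcos_psin_minus_1[of b t] by (simp add: E_def)
  qed
qed

lemma powr_sum_squares_pcos_psin_mono:
  assumes poles: "\<And>n. b + real n \<noteq> 0" and "b < 1" "0 < s" "s \<le> t"
  shows "s powr (b - 1) * (pcos b s ^ 2 + psin b s ^ 2 - 1)
       \<le> t powr (b - 1) * (pcos b t ^ 2 + psin b t ^ 2 - 1)"
proof (rule DERIV_nonneg_imp_nondecreasing[OF \<open>s \<le> t\<close>])
  fix x assume "s \<le> x" "x \<le> t"
  with \<open>0 < s\<close> have x: "x > 0" by simp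
  obtain C where C: "(pcos b has_real_derivative C) (at x)"
    and xC: "x * C = (1 - b) * (pcos b x - 1) - x * psin b x"
    using pcos_has_real_derivative[OF poles] by blast
  obtain S where S: "(psin b has_real_derivative S) (at x)"
    and xS: "x * S = (1 - b) * psin b x + x * pcos b x"
    using psin_has_real_derivative[OF poles] by blast
  define N where "N = pcos b x ^ 2 + psin b x ^ 2 - 1"
  have "((\<lambda>x. x powr (b - 1) * (pcos b x ^ 2 + psin b x ^ 2 - 1)) has_real_derivative
          (b - 1) * x powr (b - 2) * N + x powr (b - 1) * (2 * pcos b x * C + 2 * psin b x * S)) (at x)"
    unfolding N_def
    by (auto intro!: derivative_eq_intros C S simp: x power2_eq_square)
  moreover have "x powr (b - 1) = x * x powr (b - 2)"
    using x by (simp add: powr_mult_base)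
  then have "(b - 1) * x powr (b - 2) * N + x powr (b - 1) * (2 * pcos b x * C + 2 * psin b x * S)
           = x powr (b - 2) * ((b - 1) * N + 2 * pcos b x * (x * C) + 2 * psin b x * (x * S))"
    by (simp add: algebra_simps)
  also have "\<dots> = x powr (b - 2) * ((1 - b) * ((pcos b x - 1)^2 + psin b x ^ 2))"
    unfolding xC xS N_def by (simp add: algebra_simps power2_eq_square)
  moreover have "\<dots> \<ge> 0"
    using \<open>b < 1\<close> by simp
  ultimately show "\<exists>y. ((\<lambda>x. x powr (b - 1) * (pcos b x ^ 2 + psin b x ^ 2 - 1)) has_real_derivative y) (at x) \<and> 0 \<le> y"
    by auto
qed

lemma sum_squares_pcos_psin_gt_1:
  assumes "-1 < b" "b < 1" "b \<noteq> 0" "t > 0"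
  shows "pcos b t ^ 2 + psin b t ^ 2 > 1"
proof -
  have poles: "b + real n \<noteq> 0" for n
    using assms by (cases n) auto
  obtain d where "d > 0" and d: "\<And>s. s \<noteq> 0 \<Longrightarrow> dist s 0 < d \<Longrightarrow> pcos b s ^ 2 + psin b s ^ 2 > 1"
    using eventually_sum_squares_pcos_psin_gt_1[OF assms(1-3)] unfolding eventually_at by blast
  define s where "s = min (d / 2) t"
  have s: "0 < s" "s \<le> t"
    using \<open>d > 0\<close> \<open>t > 0\<close> by (auto simp: s_def)
  have "0 < s powr (b - 1) * (pcos b s ^ 2 + psin b s ^ 2 - 1)"
    using d[of s] s \<open>d > 0\<close> by (simp add: s_def)
  also have "\<dots> \<le> t powr (b - 1) * (pcos b t ^ 2 + psin b t ^ 2 - 1)"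
    by (rule powr_sum_squares_pcos_psin_mono[OF poles \<open>b < 1\<close> s])
  finally show ?thesis
    by (simp add: zero_less_mult_iff)
qed

lemma lommel_s_half_pcos_psin:
  assumes "z > 0"
  shows "lommel_s (b - 5/2) (1/2) z = z powr (b - 3/2) * pcos b z / ((b - 2) * (b - 1))"
    and "lommel_s (b - 3/2) (1/2) z = z powr (b - 3/2) * psin b z / (b - 1)"
    and "lommel_s (b - 1/2) (1/2) z = z powr (b - 3/2) * (1 - pcos b z)"
proof -
  have powr: "z powr (b - 1/2) = z powr (b - 3/2) * z" "z powr (b + 1/2) = z powr (b - 3/2) * z^2"
    using powr_add[of z "b - 3/2" 1] powr_add[of z "b - 3/2" 2] assms by (simp_all add: add.commute)
  show "lommel_s (b - 5/2) (1/2) z = z powr (b - 3/2) * pcos b z / ((b - 2) * (b - 1))"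
    by (simp add: lommel_s_half_eq_pcos)
  have "lommel_s (b - 3/2) (1/2) z = z powr (b - 3/2) * z / ((b - 1) * b) * pcos (b + 1) z"
    using lommel_s_half_eq_pcos[of "b + 1" z] by (simp add: powr algebra_simps)
  also have "\<dots> = z powr (b - 3/2) * psin b z / (b - 1)"
    by (simp add: psin_eq_pcos mult_ac)
  finally show "lommel_s (b - 3/2) (1/2) z = z powr (b - 3/2) * psin b z / (b - 1)" .
  have "lommel_s (b - 1/2) (1/2) z = z powr (b - 3/2) * (z^2 / (b * (b + 1)) * pcos (b + 2) z)"
    using lommel_s_half_eq_pcos[of "b + 2" z] by (simp add: powr algebra_simps)
  also have "\<dots> = z powr (b - 3/2) * (1 - pcos b z)"
    using pcos_eq_pcos_add_2[of b z] by simp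
  finally show "lommel_s (b - 1/2) (1/2) z = z powr (b - 3/2) * (1 - pcos b z)" .
qed

lemma lommel_s_half_turan_difference:
  assumes "z > 0" "b \<noteq> 2"
  shows "(lommel_s (b - 3/2) (1/2) z)^2 - lommel_s (b - 5/2) (1/2) z * lommel_s (b - 1/2) (1/2) z
           - 1 / (2 - b) * (lommel_s (b - 3/2) (1/2) z)^2
         = (z powr (b - 3/2))^2 * (pcos b z ^ 2 - pcos b z + psin b z ^ 2) / ((1 - b) * (2 - b))"
proof -
  have "b - 2 \<noteq> 0" "2 - b \<noteq> 0"
    using assms by auto
  then show ?thesis
    unfolding lommel_s_half_pcos_psin[OF \<open>z > 0\<close>]
    by (simp add: divide_simps) (simp add: algebra_simps power2_eq_square)
qed

theorem theorem1:
  fixes z mu :: real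
  assumes "z > 0" and "-5/2 < mu" and "mu < -1/2" and "mu \<noteq> -3/2"
  shows "(lommel_s mu (1/2) z)^2 - lommel_s (mu - 1) (1/2) z * lommel_s (mu + 1) (1/2) z
           > 1 / (1/2 - mu) * (lommel_s mu (1/2) z)^2"
proof -
  define b where "b = mu + 3/2"
  have b: "-1 < b" "b < 1" "b \<noteq> 0"
    using assms by (auto simp: b_def)
  have "pcos b z ^ 2 + psin b z ^ 2 > 1"
    by (rule sum_squares_pcos_psin_gt_1[OF b \<open>z > 0\<close>])
  then have "pcos b z ^ 2 - pcos b z + psin b z ^ 2 > 0"
    by (cases "pcos b z \<le> 1") (auto simp: power2_eq_square intro: add_pos_nonneg)
  with b \<open>z > 0\<close> have pos:
    "(z powr (b - 3/2))^2 * (pcos b z ^ 2 - pcos b z + psin b z ^ 2) / ((1 - b) * (2 - b)) > 0"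
    by simp
  have shifts: "b - 5/2 = mu - 1" "b - 3/2 = mu" "b - 1/2 = mu + 1" "2 - b = 1/2 - mu"
    by (simp_all add: b_def)
  have "b \<noteq> 2"
    using b by simp
  from lommel_s_half_turan_difference[OF \<open>z > 0\<close> this] pos show ?thesis
    unfolding shifts by linarith
qed

end
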